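(* Let $r\ge0$ be an integer and $T\in\overline{\mathrm{Sub}}(X,1)$ with $T\subset B(1,r)$. Let $(\Delta_1,\tau_1),(\Delta_2,\tau_2)$ be $R_N$-core graphs, $(v_1,v_2)\in V(\Delta_1)\times V(\Delta_2)$, and $\Gamma$ the connected component of $\Delta_1\times_{R_N}\Delta_2$ containing $(v_1,v_2)$. Then there exists a based $R_N$-graph isomorphism $(T,1)\to(\Gamma,(v_1,v_2))$ if and only if $T_{r+1}(v_1)\cap T_{r+1}(v_2)=T$.
   Context: $N\ge2$, $F_N$ free with free basis $A$, $X$ its Cayley graph (tree with vertex set $F_N$, unit edge lengths, metric $d_X$), $B(1,r)$ the closed ball of radius $r$ about $1$, $R_N=F_N\backslash X$ the rose. An $R_N$-graph is a graph with a graph morphism $\tau$ to $R_N$; $R_N$-graph morphisms commute with these maps; subtrees of $X$ are $R_N$-graphs via the projection $X\to R_N$. An $R_N$-core graph is a finite $R_N$-graph with $\tau$ locally injective and no vertices of degree $0$ or $1$. $\overline{\mathrm{Sub}}(X,1)$: finite subtrees of $X$ containing $1$ (including $\{1\}$). For $m\ge1$, $\mathcal{R}_m$: finite subtrees $T'\ni1$ in which $1$ has degree $\ge2$ and all degree-one vertices are at distance exactly $m$ from $1$. A based occurrence $(T',1)\to(\Delta,v)$ is an $R_N$-graph morphism sending $1\mapsto v$ and preserving degrees of vertices of degree $\ge2$ in $T'$. For an $R_N$-core graph $\Delta$ and $v\in V(\Delta)$, $T_m(v)$ denotes the unique $T'\in\mathcal{R}_m$ admitting a based occurrence $(T',1)\to(\Delta,v)$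 (the $m$-neighborhood of $v$). The fiber product $\Delta_1\times_{R_N}\Delta_2$ has vertex set $V(\Delta_1)\times V(\Delta_2)$ and an edge labeled $a$ from $(o(e_1),o(e_2))$ to $(t(e_1),t(e_2))$ for each pair of edges $e_1,e_2$ with label $a$. *)

theory Defs
  imports Main
begin

(* ---------- R_N-graphs ----------
   The rose R_N has one vertex and N loops labelled 0..N-1 (the free basis A).
   An R_N-graph is represented by its vertex set and its set of labelled
   directed edges (origin, label, terminus); tau sends an edge to its label.
   Edges are stored as triples, which is faithful for all graphs occurring in
   the statement (locally injective graphs have no parallel edges with equal
   label and orientation; subtrees of X and fibre products of such graphs
   neither). *)

record 'v rgraph =
  verts :: "'v set"
  edges :: "('v \<times> nat \<times> 'v) set"

definition wf_rgraph :: "nat \<Rightarrow> 'v rgraph \<Rightarrow> bool" where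
  "wf_rgraph N G \<longleftrightarrow> edges G \<subseteq> verts G \<times> {..<N} \<times> verts G"

(* degree: number of incident edge-ends (a loop counts twice) *)
definition degree :: "'v rgraph \<Rightarrow> 'v \<Rightarrow> nat" where
  "degree G v = card {(a, w). (v, a, w) \<in> edges G} + card {(u, a). (u, a, v) \<in> edges G}"

definition locally_injective :: "'v rgraph \<Rightarrow> bool" where
  "locally_injective G \<longleftrightarrow>
     (\<forall>v a w w'. (v, a, w) \<in> edges G \<and> (v, a, w') \<in> edges G \<longrightarrow> w = w') \<and>
     (\<forall>v a u u'. (u, a, v) \<in> edges G \<and> (u', a, v) \<in> edges G \<longrightarrow> u = u')"

definition core_graph :: "nat \<Rightarrow> 'v rgraph \<Rightarrow> bool" where
  "core_graph N G \<longleftrightarrow> wf_rgraph N G \<and> finite (verts G) \<and> locally_injective G \<and>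
     (\<forall>v\<in>verts G. degree G v \<noteq> 0 \<and> degree G v \<noteq> 1)"

(* R_N-graph morphisms (commuting with tau = preserving labels) *)
definition rmorphism :: "'v rgraph \<Rightarrow> 'w rgraph \<Rightarrow> ('v \<Rightarrow> 'w) \<Rightarrow> bool" where
  "rmorphism G H f \<longleftrightarrow> f ` verts G \<subseteq> verts H \<and>
     (\<forall>u a w. (u, a, w) \<in> edges G \<longrightarrow> (f u, a, f w) \<in> edges H)"

definition based_iso :: "'v rgraph \<Rightarrow> 'v \<Rightarrow> 'w rgraph \<Rightarrow> 'w \<Rightarrow> bool" where
  "based_iso G x H y \<longleftrightarrow> (\<exists>f. bij_betw f (verts G) (verts H) \<and> f x = y \<and>
     (\<forall>u\<in>verts G. \<forall>w\<in>verts G. \<forall>a. (u, a, w) \<in> edges G \<longleftrightarrow> (f u, a, f w) \<in> edges H))"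

definition adj :: "'v rgraph \<Rightarrow> 'v \<Rightarrow> 'v \<Rightarrow> bool" where
  "adj G u w \<longleftrightarrow> (\<exists>a. (u, a, w) \<in> edges G \<or> (w, a, u) \<in> edges G)"

definition comp_verts :: "'v rgraph \<Rightarrow> 'v \<Rightarrow> 'v set" where
  "comp_verts G x = {y. (x, y) \<in> {(u, w). adj G u w}\<^sup>*}"

definition component :: "'v rgraph \<Rightarrow> 'v \<Rightarrow> 'v rgraph" where
  "component G x = \<lparr>verts = comp_verts G x,
                     edges = {(u, a, w) \<in> edges G. u \<in> comp_verts G x}\<rparr>"

definition induced :: "'v rgraph \<Rightarrow> 'v set \<Rightarrow> 'v rgraph" where
  "induced G S = \<lparr>verts = S, edges = {(u, a, w) \<in> edges G. u \<in> S \<and> w \<in> S}\<rparr>"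

definition fiber_product :: "'v rgraph \<Rightarrow> 'w rgraph \<Rightarrow> ('v \<times> 'w) rgraph" where
  "fiber_product G H = \<lparr>verts = verts G \<times> verts H,
     edges = {((u1, u2), a, (w1, w2)) | u1 u2 a w1 w2.
                (u1, a, w1) \<in> edges G \<and> (u2, a, w2) \<in> edges H}\<rparr>"

(* ---------- Free group F_N and its Cayley graph X ----------
   Elements of F_N are reduced words; a letter is (i, True) = a_i or
   (i, False) = a_i^{-1}, with i < N.  1 is the empty word. *)

type_synonym letter = "nat \<times> bool"

definition reduced :: "letter list \<Rightarrow> bool" where
  "reduced w \<longleftrightarrow> (\<forall>i. Suc i < length w \<longrightarrow> w ! Suc i \<noteq> (fst (w ! i), \<not> snd (w ! i)))"

definition FN :: "nat \<Rightarrow> letter list set" where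
  "FN N = {w. reduced w \<and> (\<forall>x\<in>set w. fst x < N)}"

definition rmult :: "letter list \<Rightarrow> nat \<Rightarrow> letter list" where
  "rmult w i = (if w \<noteq> [] \<and> last w = (i, False) then butlast w else w @ [(i, True)])"

definition cayley :: "nat \<Rightarrow> letter list rgraph" where
  "cayley N = \<lparr>verts = FN N, edges = {(w, i, rmult w i) | w i. w \<in> FN N \<and> i < N}\<rparr>"

(* a subtree of X given by its vertex set (subtrees of a tree are induced) *)
definition tree_graph :: "nat \<Rightarrow> letter list set \<Rightarrow> letter list rgraph" where
  "tree_graph N T = induced (cayley N) T"

definition SubX1 :: "nat \<Rightarrow> letter list set set" where
  "SubX1 N = {T. finite T \<and> [] \<in> T \<and> T \<subseteq> FN N \<and> comp_verts (tree_graph N T) [] = T}"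

(* closed ball B(1,r) in X: d_X(1,w) is the length of the reduced word w *)
definition ballX :: "nat \<Rightarrow> nat \<Rightarrow> letter list set" where
  "ballX N r = {w \<in> FN N. length w \<le> r}"

definition Rm :: "nat \<Rightarrow> nat \<Rightarrow> letter list set set" where
  "Rm N m = {T \<in> SubX1 N. degree (tree_graph N T) [] \<ge> 2 \<and>
              (\<forall>w\<in>T. degree (tree_graph N T) w = 1 \<longrightarrow> length w = m)}"

definition based_occurrence :: "nat \<Rightarrow> letter list set \<Rightarrow> 'v rgraph \<Rightarrow> 'v \<Rightarrow> (letter list \<Rightarrow> 'v) \<Rightarrow> bool" where
  "based_occurrence N T D v f \<longleftrightarrow> rmorphism (tree_graph N T) D f \<and> f [] = v \<and>
     (\<forall>w\<in>T. degree (tree_graph N T) w \<ge> 2 \<longrightarrow> degree D (f w) = degree (tree_graph N T) w)"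

definition nbhd :: "nat \<Rightarrow> 'v rgraph \<Rightarrow> nat \<Rightarrow> 'v \<Rightarrow> letter list set" where
  "nbhd N D m v = (THE T. T \<in> Rm N m \<and> (\<exists>f. based_occurrence N T D v f))"

end

theory Submission
  imports Defs
begin

(* The neighbourhood T_m(v) of a vertex v in an R_N-core graph is described
   concretely: it is the set of reduced words of length at most m that can be
   read along a path starting at v (lemma nbhd_eq).  Reading a word in a fibre
   product means reading it simultaneously in both factors, so the
   intersection T_{r+1}(v1) \<inter> T_{r+1}(v2) is the set of words of length at most
   r + 1 readable at (v1, v2) in the fibre product (readable_upto_fp).
   The theorem then splits into two facts about a locally injective graph P
   with base point p and a subtree T of the ball B(1,r):
   (a) T_{r+1} read at p equals T iff every reduced word readable at p lies in
       T, i.e. the set of readable words is exactly T (readable_upto_eq_iff);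
   (b) the component of p is based-isomorphic to T iff the set of reduced
       words readable at p is exactly T (component_iso_iff_readable).
   For (b) the key point is that if only finitely many reduced words are
   readable at p then distinct words end at distinct vertices: otherwise one
   obtains a cyclically reduced closed path, which can be pumped to read
   arbitrarily long reduced words (reading_injective). *)

section \<open>Reduced words\<close>

definition invl :: "letter \<Rightarrow> letter" where
  "invl l = (fst l, \<not> snd l)"

lemma inv_inv [simp]: "invl (invl l) = l"
  by (simp add: invl_def)

lemma inv_eq_iff: "invl a = b \<longleftrightarrow> a = invl b"
  by (auto simp: invl_def prod_eq_iff)

lemma invl_inj [simp]: "invl a = invl b \<longleftrightarrow> a = b"
  by (metis inv_inv)

lemma invl_neq [simp]: "invl l \<noteq> l"
  by (auto simp: invl_def prod_eq_iff)

lemma fst_inv [simp]: "fst (invl l) = fst l"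
  by (simp add: invl_def)

fun red :: "letter list \<Rightarrow> bool" where
  "red [] = True"
| "red [x] = True"
| "red (x # y # w) = (y \<noteq> invl x \<and> red (y # w))"

lemma reduced_Cons2: "reduced (x # y # w) \<longleftrightarrow> y \<noteq> invl x \<and> reduced (y # w)"
proof
  assume a: "reduced (x # y # w)"
  have "y \<noteq> invl x" using a[unfolded reduced_def, rule_format, of 0] by (simp add: invl_def)
  moreover have "reduced (y # w)" unfolding reduced_def
  proof (intro allI impI)
    fix i assume "Suc i < length (y # w)"
    then show "(y # w) ! Suc i \<noteq> (fst ((y # w) ! i), \<not> snd ((y # w) ! i))"
      using a[unfolded reduced_def, rule_format, of "Suc i"] by simp
  qed
  ultimately show "y \<noteq> invl x \<and> reduced (y # w)" by simp
next
  assume a: "y \<noteq> invl x \<and> reduced (y # w)"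
  show "reduced (x # y # w)" unfolding reduced_def
  proof (intro allI impI)
    fix i assume i: "Suc i < length (x # y # w)"
    show "(x # y # w) ! Suc i \<noteq> (fst ((x # y # w) ! i), \<not> snd ((x # y # w) ! i))"
    proof (cases i)
      case 0
      then show ?thesis using a by (simp add: invl_def)
    next
      case (Suc j)
      then show ?thesis using a[THEN conjunct2, unfolded reduced_def, rule_format, of j] i by simp
    qed
  qed
qed

lemma reduced_red: "reduced w = red w"
proof (induction w rule: red.induct)
  case (3 x y w)
  then show ?case by (simp add: reduced_Cons2)
qed (simp_all add: reduced_def)

lemma red_append:
  "red (u @ w) \<longleftrightarrow> red u \<and> red w \<and> (u \<noteq> [] \<longrightarrow> w \<noteq> [] \<longrightarrow> hd w \<noteq> invl (last u))"
proof (induction u rule: red.induct)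
  case (2 x)
  then show ?case by (cases w) auto
qed auto

definition invw :: "letter list \<Rightarrow> letter list" where
  "invw w = rev (map invl w)"

lemma invw_simps [simp]:
  "invw [] = []" "invw (x # w) = invw w @ [invl x]" "invw (u @ w) = invw w @ invw u"
  by (auto simp: invw_def)

lemma last_invw: "w \<noteq> [] \<Longrightarrow> last (invw w) = invl (hd w)"
  by (cases w) auto

lemma hd_invw: "w \<noteq> [] \<Longrightarrow> hd (invw w) = invl (last w)"
  by (simp add: invw_def hd_rev last_map)

lemma red_invw: "red (invw w) = red w"
proof (induction w)
  case (Cons x w)
  then show ?case by (cases w) (auto simp: red_append last_invw inv_eq_iff)
qed simp

lemma FN_iff: "w \<in> FN N \<longleftrightarrow> red w \<and> (\<forall>x\<in>set w. fst x < N)"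
  by (simp add: FN_def reduced_red)

lemma FN_append:
  "u @ w \<in> FN N \<longleftrightarrow> u \<in> FN N \<and> w \<in> FN N \<and> (u \<noteq> [] \<longrightarrow> w \<noteq> [] \<longrightarrow> hd w \<noteq> invl (last u))"
  by (auto simp: FN_iff red_append)

lemma FN_Nil [simp]: "[] \<in> FN N"
  by (simp add: FN_iff)

lemma FN_take: "w \<in> FN N \<Longrightarrow> take k w \<in> FN N"
  using FN_append[of "take k w" "drop k w"] by simp

lemma FN_butlast: "w \<in> FN N \<Longrightarrow> butlast w \<in> FN N"
  by (simp add: butlast_conv_take FN_take)

lemma FN_invw: "w \<in> FN N \<Longrightarrow> invw w \<in> FN N"
  using red_invw[of w] by (auto simp: FN_iff invw_def)

definition mul :: "letter list \<Rightarrow> letter \<Rightarrow> letter list" where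
  "mul u l = (if u \<noteq> [] \<and> last u = invl l then butlast u else u @ [l])"

lemma rmult_mul: "rmult w i = mul w (i, True)"
  by (simp add: rmult_def mul_def invl_def)

lemma mul_snoc: "u @ [l] \<in> FN N \<Longrightarrow> mul u l = u @ [l]"
  unfolding mul_def by (auto simp: FN_append)

lemma FN_mul:
  assumes "u \<in> FN N" "fst l < N"
  shows "mul u l \<in> FN N"
proof (cases "u \<noteq> [] \<and> last u = invl l")
  case True
  then show ?thesis using assms by (simp add: mul_def FN_butlast)
next
  case False
  have "[l] \<in> FN N" using assms by (simp add: FN_iff)
  then show ?thesis using False assms by (auto simp: mul_def FN_append inv_eq_iff)
qed

lemma mul_inverse:
  assumes u: "u \<in> FN N"
  shows "mul (mul u l) (invl l) = u"
proof (cases "u \<noteq> [] \<and> last u = invl l")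
  case True
  have ub: "u = butlast u @ [invl l]" using True by (metis append_butlast_last_id)
  have "butlast u @ [invl l] \<in> FN N" using u ub by simp
  then have "\<not> (butlast u \<noteq> [] \<and> last (butlast u) = l)" by (auto simp: FN_append)
  then have "mul (butlast u) (invl l) = butlast u @ [invl l]" unfolding mul_def by auto
  moreover have "mul u l = butlast u" using True by (simp add: mul_def)
  ultimately show ?thesis using ub by simp
next
  case False
  then show ?thesis unfolding mul_def by auto
qed

section \<open>Directed edges and walks in R_N-graphs\<close>

text \<open>An edge traversed forwards reads its label a_i, traversed backwards it
  reads a_i^{-1}; dedge G x l y says that letter l can be read from x to y.\<close>

definition dedge :: "'v rgraph \<Rightarrow> 'v \<Rightarrow> letter \<Rightarrow> 'v \<Rightarrow> bool" where
  "dedge G x l y = (if snd l then (x, fst l, y) \<in> edges G else (y, fst l, x) \<in> edges G)"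

lemma dedge_inv: "dedge G y (invl l) x \<longleftrightarrow> dedge G x l y"
  by (simp add: dedge_def invl_def)

lemma li_iff: "locally_injective G \<longleftrightarrow> (\<forall>x l y y'. dedge G x l y \<longrightarrow> dedge G x l y' \<longrightarrow> y = y')"
proof
  assume a: "locally_injective G"
  show "\<forall>x l y y'. dedge G x l y \<longrightarrow> dedge G x l y' \<longrightarrow> y = y'"
  proof (intro allI impI)
    fix x l y y' assume "dedge G x l y" "dedge G x l y'"
    then show "y = y'" using a unfolding locally_injective_def dedge_def
      by (cases "snd l") auto
  qed
next
  assume a: "\<forall>x l y y'. dedge G x l y \<longrightarrow> dedge G x l y' \<longrightarrow> y = y'"
  show "locally_injective G" unfolding locally_injective_def
  proof (intro conjI allI impI)
    fix v a w w' assume "(v, a, w) \<in> edges G \<and> (v, a, w') \<in> edges G"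
    then show "w = w'" using a[rule_format, of v "(a, True)" w w'] by (simp add: dedge_def)
  next
    fix v a u u' assume "(u, a, v) \<in> edges G \<and> (u', a, v) \<in> edges G"
    then show "u = u'" using a[rule_format, of v "(a, False)" u u'] by (simp add: dedge_def)
  qed
qed

lemma li_det: "locally_injective G \<Longrightarrow> dedge G x l y \<Longrightarrow> dedge G x l y' \<Longrightarrow> y = y'"
  unfolding li_iff by blast

lemma li_det_back: "locally_injective G \<Longrightarrow> dedge G y l x \<Longrightarrow> dedge G y' l x \<Longrightarrow> y = y'"
  using li_det[of G x "invl l" y y'] by (simp add: dedge_inv)

lemma adj_iff: "adj G u w \<longleftrightarrow> (\<exists>l. dedge G u l w)"
proof
  assume "adj G u w"
  then obtain a where "(u, a, w) \<in> edges G \<or> (w, a, u) \<in> edges G" by (auto simp: adj_def)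
  then show "\<exists>l. dedge G u l w"
  proof
    assume "(u, a, w) \<in> edges G"
    then show ?thesis by (intro exI[of _ "(a, True)"]) (simp add: dedge_def)
  next
    assume "(w, a, u) \<in> edges G"
    then show ?thesis by (intro exI[of _ "(a, False)"]) (simp add: dedge_def)
  qed
next
  assume "\<exists>l. dedge G u l w"
  then obtain l where "dedge G u l w" by blast
  then show "adj G u w" unfolding adj_def dedge_def by (cases "snd l") auto
qed

lemma rmorph_dedge: "rmorphism G H f \<Longrightarrow> dedge G u l w \<Longrightarrow> dedge H (f u) l (f w)"
  unfolding rmorphism_def dedge_def by (cases "snd l") auto

definition labs :: "nat \<Rightarrow> 'v rgraph \<Rightarrow> bool" where
  "labs N G \<longleftrightarrow> (\<forall>u a w. (u, a, w) \<in> edges G \<longrightarrow> a < N)"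

lemma labs_dedge: "labs N G \<Longrightarrow> dedge G x l y \<Longrightarrow> fst l < N"
  by (auto simp: labs_def dedge_def split: if_splits)

lemma wf_labs: "wf_rgraph N G \<Longrightarrow> labs N G"
  by (auto simp: wf_rgraph_def labs_def)

fun walk :: "'v rgraph \<Rightarrow> 'v \<Rightarrow> letter list \<Rightarrow> 'v \<Rightarrow> bool" where
  "walk G x [] y = (x = y)"
| "walk G x (l # w) y = (\<exists>z. dedge G x l z \<and> walk G z w y)"

lemma walk_append: "walk G x (u @ w) y \<longleftrightarrow> (\<exists>z. walk G x u z \<and> walk G z w y)"
  by (induction u arbitrary: x) auto

lemma walk_snoc: "walk G x (u @ [l]) y \<longleftrightarrow> (\<exists>z. walk G x u z \<and> dedge G z l y)"
  by (simp add: walk_append)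

lemma walk_det: "locally_injective G \<Longrightarrow> walk G x w y \<Longrightarrow> walk G x w y' \<Longrightarrow> y = y'"
  by (induction w arbitrary: x) (auto dest: li_det)

lemma walk_invw: "walk G x w y \<Longrightarrow> walk G y (invw w) x"
  by (induction w arbitrary: x) (auto simp: walk_append dedge_inv)

definition endpt :: "'v rgraph \<Rightarrow> 'v \<Rightarrow> letter list \<Rightarrow> 'v" where
  "endpt G x w = (THE y. walk G x w y)"

lemma endpt_eq:
  assumes li: "locally_injective G" and w: "walk G x w y"
  shows "endpt G x w = y"
  unfolding endpt_def
proof (rule the_equality)
  show "walk G x w y" by (fact w)
  show "\<And>y'. walk G x w y' \<Longrightarrow> y' = y" using walk_det[OF li w] by simp
qed

text \<open>Free cancellation is compatible with reading: since local injectivity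
  lets us backtrack along the last edge, reading mul w l is the same as
  reading w followed by l.\<close>

lemma walk_mul:
  assumes li: "locally_injective G" and w: "walk G x w y" and l: "dedge G y l z"
  shows "walk G x (mul w l) z"
proof (cases "w \<noteq> [] \<and> last w = invl l")
  case True
  then have "w = butlast w @ [invl l]" by (metis append_butlast_last_id)
  then have "walk G x (butlast w @ [invl l]) y" using w by simp
  then obtain y0 where y0: "walk G x (butlast w) y0" "dedge G y0 (invl l) y"
    unfolding walk_snoc by blast
  then have "y0 = z" using li_det[OF li _ l] dedge_inv[of G y0 l y] by simp
  then show ?thesis using True y0(1) by (simp add: mul_def)
next
  case False
  then show ?thesis using w l by (auto simp: mul_def walk_snoc)
qed

lemma mul_walk:
  assumes li: "locally_injective G" and u: "walk G p u x" and ul: "walk G p (mul u l) y"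
  shows "dedge G x l y"
proof (cases "u \<noteq> [] \<and> last u = invl l")
  case True
  then have "u = butlast u @ [invl l]" by (metis append_butlast_last_id)
  then have "walk G p (butlast u @ [invl l]) x" using u by simp
  then obtain z where z: "walk G p (butlast u) z" "dedge G z (invl l) x"
    unfolding walk_snoc by blast
  have "z = y" using walk_det[OF li z(1)] ul True by (simp add: mul_def)
  then show ?thesis using z(2) dedge_inv[of G z l x] by simp
next
  case False
  then obtain z where z: "walk G p u z" "dedge G z l y"
    using ul by (auto simp: mul_def walk_snoc)
  then show ?thesis using walk_det[OF li z(1) u] by simp
qed

lemma walk_reduce:
  assumes li: "locally_injective G" and lb: "labs N G" and "walk G x w y"
  shows "\<exists>w'\<in>FN N. walk G x w' y"
  using assms(3)
proof (induction w arbitrary: y rule: rev_induct)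
  case Nil
  then show ?case by (intro bexI[of _ "[]"]) auto
next
  case (snoc l w)
  then obtain y0 where "walk G x w y0" "dedge G y0 l y" by (auto simp: walk_snoc)
  then obtain w' where "w' \<in> FN N" "walk G x w' y0" using snoc by auto
  then show ?case using walk_mul[OF li] FN_mul labs_dedge[OF lb] \<open>dedge G y0 l y\<close> by blast
qed

lemma walk_verts:
  assumes wf: "wf_rgraph N G" and "v \<in> verts G" "walk G v w y"
  shows "y \<in> verts G"
  using assms(2,3)
proof (induction w arbitrary: v)
  case (Cons l w)
  then obtain z where z: "dedge G v l z" "walk G z w y" by auto
  have "z \<in> verts G" using z(1) wf unfolding wf_rgraph_def dedge_def by (auto split: if_splits)
  then show ?case using Cons.IH z(2) by blast
qed simp

lemma comp_verts_walk: "y \<in> comp_verts G x \<longleftrightarrow> (\<exists>w. walk G x w y)"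
proof -
  have "(x, y) \<in> {(u, w). adj G u w}\<^sup>* \<longleftrightarrow> (\<exists>w. walk G x w y)"
  proof
    assume "(x, y) \<in> {(u, w). adj G u w}\<^sup>*"
    then show "\<exists>w. walk G x w y"
    proof (induction rule: rtrancl_induct)
      case base
      show ?case by (intro exI[of _ "[]"]) simp
    next
      case (step y z)
      from step.IH obtain w where "walk G x w y" by blast
      moreover obtain l where "dedge G y l z" using step.hyps(2) adj_iff by fastforce
      ultimately have "walk G x (w @ [l]) z" unfolding walk_snoc by blast
      then show ?case by blast
    qed
  next
    assume "\<exists>w. walk G x w y"
    then obtain w where "walk G x w y" by blast
    then show "(x, y) \<in> {(u, w). adj G u w}\<^sup>*"
    proof (induction w arbitrary: y rule: rev_induct)
      case (snoc l w)
      then obtain y0 where "walk G x w y0" "dedge G y0 l y" unfolding walk_snoc by blast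
      then have "(y0, y) \<in> {(u, w). adj G u w}" unfolding adj_iff by blast
      with snoc.IH[OF \<open>walk G x w y0\<close>] show ?case by (rule rtrancl_into_rtrancl)
    qed simp
  qed
  then show ?thesis by (simp add: comp_verts_def)
qed

lemma comp_step:
  assumes "u \<in> comp_verts G x" "dedge G u l w"
  shows "w \<in> comp_verts G x"
proof -
  obtain c where "walk G x c u" using assms(1) unfolding comp_verts_walk by blast
  then have "walk G x (c @ [l]) w" using assms(2) unfolding walk_snoc by blast
  then show ?thesis unfolding comp_verts_walk by blast
qed

text \<open>The component of x is closed under both directions of edges, so its
  directed edges are exactly those of G starting in it.\<close>

lemma dedge_comp: "dedge (component G x) u l w \<longleftrightarrow> dedge G u l w \<and> u \<in> comp_verts G x"
proof (cases "snd l")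
  case False
  have "dedge G u l w \<Longrightarrow> w \<in> comp_verts G x \<longleftrightarrow> u \<in> comp_verts G x"
    using comp_step[of _ G x] dedge_inv[of G] by blast
  then show ?thesis using False by (auto simp: dedge_def component_def)
qed (simp add: dedge_def component_def)

lemma walk_component: "walk (component G x) y w z \<Longrightarrow> walk G y w z"
  by (induction w arbitrary: y) (auto simp: dedge_comp)

definition dirs :: "'v rgraph \<Rightarrow> 'v \<Rightarrow> letter set" where
  "dirs G v = {l. \<exists>z. dedge G v l z}"

lemma dirs_finite:
  assumes lb: "labs N G"
  shows "finite (dirs G v)"
proof (rule finite_subset)
  show "dirs G v \<subseteq> {..<N} \<times> UNIV"
    using labs_dedge[OF lb] by (auto simp: dirs_def mem_Times_iff)
qed simp

text \<open>In a locally injective graph an edge at v is determined by its label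
  and orientation, so the degree of v counts the letters readable at v.\<close>

lemma card_out:
  assumes li: "locally_injective G"
  shows "card {(a, w). (v, a, w) \<in> edges G} = card {a. \<exists>w. (v, a, w) \<in> edges G}"
proof -
  have inj: "inj_on fst {(a, w). (v, a, w) \<in> edges G}"
  proof (rule inj_onI)
    fix x y assume "x \<in> {(a, w). (v, a, w) \<in> edges G}" "y \<in> {(a, w). (v, a, w) \<in> edges G}" "fst x = fst y"
    then show "x = y" using li unfolding locally_injective_def by (cases x; cases y) auto
  qed
  have img: "fst ` {(a, w). (v, a, w) \<in> edges G} = {a. \<exists>w. (v, a, w) \<in> edges G}"
    by (auto simp: image_iff)
  show ?thesis using card_image[OF inj] img by simp
qed

lemma card_in:
  assumes li: "locally_injective G"
  shows "card {(u, a). (u, a, v) \<in> edges G} = card {a. \<exists>u. (u, a, v) \<in> edges G}"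
proof -
  have inj: "inj_on snd {(u, a). (u, a, v) \<in> edges G}"
  proof (rule inj_onI)
    fix x y assume "x \<in> {(u, a). (u, a, v) \<in> edges G}" "y \<in> {(u, a). (u, a, v) \<in> edges G}" "snd x = snd y"
    then show "x = y" using li unfolding locally_injective_def by (cases x; cases y) auto
  qed
  have img: "snd ` {(u, a). (u, a, v) \<in> edges G} = {a. \<exists>u. (u, a, v) \<in> edges G}"
    by (auto simp: image_iff)
  show ?thesis using card_image[OF inj] img by simp
qed

lemma degree_dirs:
  assumes li: "locally_injective G" and lb: "labs N G"
  shows "degree G v = card (dirs G v)"
proof -
  let ?O = "{a. \<exists>w. (v, a, w) \<in> edges G}" and ?I = "{a. \<exists>u. (u, a, v) \<in> edges G}"
  have "?O \<subseteq> {..<N}" "?I \<subseteq> {..<N}" using lb unfolding labs_def by blast+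
  then have fin: "finite ?O" "finite ?I" by (auto dest: finite_subset)
  have split: "dirs G v = (\<lambda>a. (a, True)) ` ?O \<union> (\<lambda>a. (a, False)) ` ?I"
  proof (rule set_eqI)
    fix l :: letter
    show "l \<in> dirs G v \<longleftrightarrow> l \<in> (\<lambda>a. (a, True)) ` ?O \<union> (\<lambda>a. (a, False)) ` ?I"
      by (cases l; cases "snd l") (auto simp: dirs_def dedge_def)
  qed
  have "card (dirs G v) = card ((\<lambda>a. (a, True)) ` ?O) + card ((\<lambda>a. (a, False)) ` ?I)"
    unfolding split using fin by (intro card_Un_disjoint) auto
  also have "\<dots> = card ?O + card ?I"
    by (simp add: card_image inj_on_def)
  finally show ?thesis
    unfolding degree_def using card_out[OF li, of v] card_in[OF li, of v] by simp
qed

lemma core_li: "core_graph N D \<Longrightarrow> locally_injective D"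
  by (simp add: core_graph_def)

lemma core_labs: "core_graph N D \<Longrightarrow> labs N D"
  by (simp add: core_graph_def wf_labs)

lemma core_dirs2:
  assumes c: "core_graph N D" and x: "x \<in> verts D"
  shows "2 \<le> card (dirs D x)"
proof -
  have "degree D x \<noteq> 0" "degree D x \<noteq> 1" using c x unfolding core_graph_def by auto
  then show ?thesis using degree_dirs[OF core_li[OF c] core_labs[OF c]] by simp
qed

section \<open>Subtrees of the Cayley graph X\<close>

lemma tree_edge_iff:
  "(u, a, z) \<in> edges (tree_graph N S) \<longleftrightarrow> u \<in> S \<and> z \<in> S \<and> u \<in> FN N \<and> a < N \<and> z = mul u (a, True)"
  by (auto simp: tree_graph_def induced_def cayley_def rmult_mul)

lemma dedge_tree:
  assumes S: "S \<subseteq> FN N"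
  shows "dedge (tree_graph N S) u l z \<longleftrightarrow> u \<in> S \<and> z \<in> S \<and> fst l < N \<and> z = mul u l"
proof (cases "snd l")
  case True
  then obtain a where l: "l = (a, True)" by (cases l) auto
  show ?thesis unfolding l using S by (simp add: dedge_def tree_edge_iff) blast
next
  case False
  have il: "invl l = (fst l, True)" using False by (simp add: invl_def prod_eq_iff)
  have "dedge (tree_graph N S) u l z \<longleftrightarrow> z \<in> S \<and> u \<in> S \<and> z \<in> FN N \<and> fst l < N \<and> u = mul z (invl l)"
    using False by (simp add: dedge_def tree_edge_iff il)
  also have "\<dots> \<longleftrightarrow> u \<in> S \<and> z \<in> S \<and> fst l < N \<and> z = mul u l"
    using S mul_inverse[of z N "invl l"] mul_inverse[of u N l] FN_mul[of u N l] by auto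
  finally show ?thesis .
qed

lemma tree_li: "S \<subseteq> FN N \<Longrightarrow> locally_injective (tree_graph N S)"
  unfolding li_iff by (simp add: dedge_tree)

lemma tree_labs: "labs N (tree_graph N S)"
  by (auto simp: labs_def tree_edge_iff)

lemma dirs_tree:
  assumes S: "S \<subseteq> FN N"
  shows "dirs (tree_graph N S) u = (if u \<in> S then {l. fst l < N \<and> mul u l \<in> S} else {})"
  unfolding dirs_def dedge_tree[OF S] by auto

lemma degree_tree: "S \<subseteq> FN N \<Longrightarrow> degree (tree_graph N S) u = card (dirs (tree_graph N S) u)"
  by (rule degree_dirs[OF tree_li tree_labs])

lemma SubX1_D:
  assumes "T \<in> SubX1 N"
  shows "finite T" "[] \<in> T" "T \<subseteq> FN N" "comp_verts (tree_graph N T) [] = T"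
  using assms unfolding SubX1_def by auto

lemma walk_tree_in:
  assumes "walk (tree_graph N S) x w y" "x \<in> S" "S \<subseteq> FN N"
  shows "y \<in> S"
  using assms
proof (induction w arbitrary: y rule: rev_induct)
  case (snoc l w)
  then obtain z where "walk (tree_graph N S) x w z" "dedge (tree_graph N S) z l y"
    unfolding walk_snoc by blast
  then show ?case using dedge_tree[OF snoc.prems(3)] snoc.IH snoc.prems(2,3) by blast
qed simp

text \<open>A subtree of X containing 1 is closed under taking prefixes: the
  vertices of the unique reduced path from 1 to w are the prefixes of w.\<close>

lemma prefix_closed:
  assumes T: "T \<in> SubX1 N" and w: "w \<in> T"
  shows "take k w \<in> T"
proof -
  have S: "T \<subseteq> FN N" using SubX1_D[OF T] by blast
  have "w \<in> comp_verts (tree_graph N T) []" using SubX1_D(4)[OF T] w by simp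
  then have "([], w) \<in> {(u, w). adj (tree_graph N T) u w}\<^sup>*"
    by (simp add: comp_verts_def)
  then have "\<forall>k. take k w \<in> T"
  proof (induction rule: rtrancl_induct)
    case base
    then show ?case using SubX1_D(2)[OF T] by simp
  next
    case (step y z)
    then obtain l where "dedge (tree_graph N T) y l z" by (auto simp: adj_iff)
    then have z: "z \<in> T" "z = mul y l" using dedge_tree[OF S] by auto
    show ?case
    proof
      fix k
      show "take k z \<in> T"
      proof (cases "y \<noteq> [] \<and> last y = invl l")
        case True
        then have "z = take (length y - 1) y" using z by (simp add: mul_def butlast_conv_take)
        then show ?thesis using step.IH by (simp add: min_def)
      next
        case False
        then have zz: "z = y @ [l]" using z(2) unfolding mul_def by auto
        show ?thesis
        proof (cases "k \<le> length y")
          case True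
          then show ?thesis using zz step.IH by simp
        next
          case False
          then show ?thesis using zz z by simp
        qed
      qed
    qed
  qed
  then show ?thesis by blast
qed

lemma prefix_closed_app: "T \<in> SubX1 N \<Longrightarrow> u @ w \<in> T \<Longrightarrow> u \<in> T"
  using prefix_closed[of T N "u @ w" "length u"] by simp

lemma SubX1_I:
  assumes fin: "finite S" and e: "[] \<in> S" and S: "S \<subseteq> FN N"
    and pc: "\<And>u w. u @ w \<in> S \<Longrightarrow> u \<in> S"
  shows "S \<in> SubX1 N"
proof -
  have "walk (tree_graph N S) [] w w" if "w \<in> S" for w
    using that
  proof (induction w rule: rev_induct)
    case (snoc l u)
    have u: "u \<in> S" using pc snoc.prems by blast
    have f: "u @ [l] \<in> FN N" using S snoc.prems by blast
    then have "dedge (tree_graph N S) u l (u @ [l])"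
      using dedge_tree[OF S] u snoc.prems mul_snoc[OF f] by (simp add: FN_iff)
    then show ?case using snoc.IH[OF u] unfolding walk_snoc by blast
  qed simp
  then have "comp_verts (tree_graph N S) [] = S"
    using walk_tree_in[OF _ e S] by (fastforce simp: comp_verts_walk)
  then show ?thesis using assms unfolding SubX1_def by blast
qed

text \<open>A vertex w \<noteq> 1 of a subtree with no child w l is a leaf: only the
  letter leading back to its parent can be read there.\<close>

lemma leaf_degree:
  assumes S: "S \<subseteq> FN N" and pc: "\<And>u w. u @ w \<in> S \<Longrightarrow> u \<in> S"
    and u: "u \<in> S" "u \<noteq> []" and nl: "\<And>l. u @ [l] \<notin> S"
  shows "degree (tree_graph N S) u = 1"
proof -
  have "butlast u \<in> S" using pc[of "butlast u" "[last u]"] u by simp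
  moreover have "fst (last u) < N" using S u by (auto simp: FN_iff)
  ultimately have "dirs (tree_graph N S) u = {invl (last u)}"
  proof (intro set_eqI)
    fix l
    show "l \<in> dirs (tree_graph N S) u \<longleftrightarrow> l \<in> {invl (last u)}"
    proof (cases "l = invl (last u)")
      case True
      then have "mul u l = butlast u" using u unfolding mul_def by simp
      then show ?thesis using True u \<open>butlast u \<in> S\<close> \<open>fst (last u) < N\<close> by (simp add: dirs_tree[OF S])
    next
      case False
      then have "mul u l = u @ [l]" using u unfolding mul_def by (auto simp: inv_eq_iff)
      then show ?thesis using False u nl by (simp add: dirs_tree[OF S])
    qed
  qed
  then show ?thesis using degree_tree[OF S] by simp
qed

lemma rmorphism_reads_tree:
  assumes T: "T \<in> SubX1 N" and f: "rmorphism (tree_graph N T) G f" and w: "w \<in> T"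
  shows "walk G (f []) w (f w)"
  using w
proof (induction w rule: rev_induct)
  case (snoc l u)
  have S: "T \<subseteq> FN N" by (rule SubX1_D(3)[OF T])
  have u: "u \<in> T" using prefix_closed_app[OF T snoc.prems] .
  have fw: "u @ [l] \<in> FN N" using S snoc.prems by blast
  then have "dedge (tree_graph N T) u l (u @ [l])"
    using dedge_tree[OF S] u snoc.prems mul_snoc[OF fw] by (simp add: FN_iff)
  then have "dedge G (f u) l (f (u @ [l]))" by (rule rmorph_dedge[OF f])
  then show ?case using snoc.IH[OF u] unfolding walk_snoc by blast
qed simp

section \<open>Readable words and the neighbourhoods T_m(v)\<close>

definition readable :: "nat \<Rightarrow> 'v rgraph \<Rightarrow> 'v \<Rightarrow> letter list set" where
  "readable N G v = {w \<in> FN N. \<exists>y. walk G v w y}"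

definition readable_upto :: "nat \<Rightarrow> 'v rgraph \<Rightarrow> 'v \<Rightarrow> nat \<Rightarrow> letter list set" where
  "readable_upto N G v m = {w \<in> readable N G v. length w \<le> m}"

lemma readable_prefix: "u @ w \<in> readable N G v \<Longrightarrow> u \<in> readable N G v"
  by (auto simp: readable_def FN_append walk_append)

lemma readable_upto_prefix: "u @ w \<in> readable_upto N G v m \<Longrightarrow> u \<in> readable_upto N G v m"
  by (auto simp: readable_upto_def dest: readable_prefix)

lemma readable_upto_FN: "readable_upto N G v m \<subseteq> FN N"
  by (auto simp: readable_upto_def readable_def)

lemma readable_walk: "locally_injective G \<Longrightarrow> w \<in> readable_upto N G v m \<Longrightarrow> walk G v w (endpt G v w)"
  by (auto simp: readable_upto_def readable_def endpt_eq)

lemma finite_FN_len: "finite {w \<in> FN N. length w \<le> m}"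
proof (rule finite_subset)
  show "{w \<in> FN N. length w \<le> m} \<subseteq> {xs. set xs \<subseteq> {..<N} \<times> UNIV \<and> length xs \<le> m}"
    by (auto simp: FN_iff)
  show "finite {xs. set xs \<subseteq> ({..<N} \<times> (UNIV :: bool set)) \<and> length xs \<le> m}"
    by (rule finite_lists_length_le) simp
qed

lemma readable_upto_SubX1: "readable_upto N G v m \<in> SubX1 N"
proof (rule SubX1_I)
  show "finite (readable_upto N G v m)"
    by (rule finite_subset[OF _ finite_FN_len[of N m]]) (auto simp: readable_upto_def readable_def)
  show "[] \<in> readable_upto N G v m" by (auto simp: readable_upto_def readable_def)
qed (auto simp: readable_upto_FN readable_upto_prefix)

lemma length_mul: "length (mul u l) \<le> Suc (length u)"
  by (auto simp: mul_def)

lemma readable_upto_dirs: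
  assumes li: "locally_injective G" and lb: "labs N G"
    and u: "u \<in> readable_upto N G v m" "length u < m" and x: "walk G v u x"
  shows "dirs (tree_graph N (readable_upto N G v m)) u = dirs G x"
proof (rule set_eqI)
  fix l
  have "l \<in> dirs (tree_graph N (readable_upto N G v m)) u \<longleftrightarrow>
      fst l < N \<and> mul u l \<in> readable_upto N G v m"
    using u by (simp add: dirs_tree[OF readable_upto_FN])
  also have "\<dots> \<longleftrightarrow> (\<exists>z. dedge G x l z)"
  proof
    assume "fst l < N \<and> mul u l \<in> readable_upto N G v m"
    then obtain y where "walk G v (mul u l) y" by (auto simp: readable_upto_def readable_def)
    then show "\<exists>z. dedge G x l z" using mul_walk[OF li x] by blast
  next
    assume "\<exists>z. dedge G x l z"
    then obtain z where z: "dedge G x l z" by blast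
    have fl: "fst l < N" by (rule labs_dedge[OF lb z])
    have "u \<in> FN N" using u(1) readable_upto_FN[of N G v m] by blast
    then have "mul u l \<in> FN N" using fl by (rule FN_mul)
    moreover have "walk G v (mul u l) z" by (rule walk_mul[OF li x z])
    moreover have "length (mul u l) \<le> m" using u(2) length_mul[of u l] by simp
    ultimately show "fst l < N \<and> mul u l \<in> readable_upto N G v m"
      using fl by (auto simp: readable_upto_def readable_def)
  qed
  finally show "l \<in> dirs (tree_graph N (readable_upto N G v m)) u \<longleftrightarrow> l \<in> dirs G x"
    by (simp add: dirs_def)
qed

lemma readable_upto_degree_interior:
  assumes li: "locally_injective G" and lb: "labs N G"
    and u: "u \<in> readable_upto N G v m" "length u < m"
  shows "degree (tree_graph N (readable_upto N G v m)) u = degree G (endpt G v u)"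
  using readable_upto_dirs[OF li lb u readable_walk[OF li u(1)]]
  by (simp add: degree_tree[OF readable_upto_FN] degree_dirs[OF li lb])

lemma readable_upto_degree_leaf:
  assumes u: "u \<in> readable_upto N G v m" "length u = m" "u \<noteq> []"
  shows "degree (tree_graph N (readable_upto N G v m)) u = 1"
proof (rule leaf_degree[OF readable_upto_FN readable_upto_prefix u(1,3)])
  show "\<And>l. u @ [l] \<notin> readable_upto N G v m" using u(2) by (auto simp: readable_upto_def)
qed

lemma core_endpt_verts:
  assumes c: "core_graph N D" and v: "v \<in> verts D" and u: "u \<in> readable_upto N D v m"
  shows "endpt D v u \<in> verts D"
proof (rule walk_verts[OF _ v readable_walk[OF core_li[OF c] u]])
  show "wf_rgraph N D" using c by (simp add: core_graph_def)
qed

lemma readable_upto_Rm: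
  assumes c: "core_graph N D" and v: "v \<in> verts D" and m: "1 \<le> m"
  shows "readable_upto N D v m \<in> Rm N m"
  unfolding Rm_def
proof (intro CollectI conjI readable_upto_SubX1 ballI impI)
  let ?R = "readable_upto N D v m"
  note li = core_li[OF c] and lb = core_labs[OF c]
  have e: "[] \<in> ?R" using SubX1_D(2)[OF readable_upto_SubX1] .
  show "2 \<le> degree (tree_graph N ?R) []"
    using readable_upto_degree_interior[OF li lb e] m core_dirs2[OF c v] endpt_eq[OF li, of v "[]" v]
    by (simp add: degree_dirs[OF li lb])
  fix w assume w: "w \<in> ?R" and d: "degree (tree_graph N ?R) w = 1"
  show "length w = m"
  proof (rule ccontr)
    assume "length w \<noteq> m"
    then have "length w < m" using w by (simp add: readable_upto_def)
    then show False
      using readable_upto_degree_interior[OF li lb w] d core_dirs2[OF c core_endpt_verts[OF c v w]]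
      by (simp add: degree_dirs[OF li lb])
  qed
qed

lemma readable_upto_occurrence:
  assumes c: "core_graph N D" and v: "v \<in> verts D" and m: "1 \<le> m"
  shows "based_occurrence N (readable_upto N D v m) D v (endpt D v)"
  unfolding based_occurrence_def
proof (intro conjI ballI impI)
  let ?R = "readable_upto N D v m"
  note li = core_li[OF c] and lb = core_labs[OF c]
  show "rmorphism (tree_graph N ?R) D (endpt D v)"
    unfolding rmorphism_def
  proof (intro conjI allI impI)
    show "endpt D v ` verts (tree_graph N ?R) \<subseteq> verts D"
      using core_endpt_verts[OF c v] by (auto simp: tree_graph_def induced_def)
    fix u a w assume "(u, a, w) \<in> edges (tree_graph N ?R)"
    then have u: "u \<in> ?R" and w: "w \<in> ?R" and wm: "w = mul u (a, True)"
      by (auto simp: tree_edge_iff)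
    have "dedge D (endpt D v u) (a, True) (endpt D v w)"
      using mul_walk[OF li readable_walk[OF li u]] readable_walk[OF li w] wm by simp
    then show "(endpt D v u, a, endpt D v w) \<in> edges D" by (simp add: dedge_def)
  qed
  show "endpt D v [] = v" using endpt_eq[OF li, of v "[]" v] by simp
  fix w assume w: "w \<in> ?R" and d: "2 \<le> degree (tree_graph N ?R) w"
  have "length w < m"
  proof (rule ccontr)
    assume "\<not> length w < m"
    then have "length w = m" "w \<noteq> []" using w m by (auto simp: readable_upto_def)
    then show False using readable_upto_degree_leaf[OF w] d by simp
  qed
  then show "degree D (endpt D v w) = degree (tree_graph N ?R) w"
    using readable_upto_degree_interior[OF li lb w] by simp
qed

text \<open>Conversely, every tree in R_m is bounded by its leaves, which all lie at
  distance m: a vertex of maximal length is a leaf.\<close>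

lemma Rm_length_bound:
  assumes T: "T \<in> Rm N m" and w: "w \<in> T"
  shows "length w \<le> m"
proof -
  have TS: "T \<in> SubX1 N" using T by (simp add: Rm_def)
  let ?M = "Max (length ` T)"
  have fl: "finite (length ` T)" using SubX1_D(1)[OF TS] by simp
  obtain w0 where w0: "w0 \<in> T" "length w0 = ?M" using Max_in[OF fl] w by fastforce
  have Mge: "\<And>u. u \<in> T \<Longrightarrow> length u \<le> ?M" using Max_ge[OF fl] by simp
  have "?M \<le> m"
  proof (rule ccontr)
    assume big: "\<not> ?M \<le> m"
    then have "w0 \<noteq> []" using w0 by auto
    moreover have "\<And>l. w0 @ [l] \<notin> T" using Mge w0 by fastforce
    ultimately have "degree (tree_graph N T) w0 = 1"
      using leaf_degree[OF SubX1_D(3)[OF TS], of w0] prefix_closed_app[OF TS] w0(1) by blast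
    then have "length w0 = m" using T w0(1) by (simp add: Rm_def)
    then show False using w0 big by simp
  qed
  then show ?thesis using Mge[OF w] by simp
qed

text \<open>Vertices of a tree in R_m at distance less than m have degree at least
  two: the root by definition, the others since they are not leaves but
  are joined to their parent.\<close>

lemma Rm_interior_degree:
  assumes T: "T \<in> Rm N m" and u: "u \<in> T" "length u < m"
  shows "2 \<le> degree (tree_graph N T) u"
proof (cases "u = []")
  case True
  then show ?thesis using T by (simp add: Rm_def)
next
  case False
  have TS: "T \<in> SubX1 N" using T by (simp add: Rm_def)
  have S: "T \<subseteq> FN N" by (rule SubX1_D(3)[OF TS])
  have "butlast u \<in> T" using prefix_closed_app[OF TS, of "butlast u" "[last u]"] u False by simp
  moreover have "fst (invl (last u)) < N" using S u False by (auto simp: FN_iff)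
  moreover have "mul u (invl (last u)) = butlast u" using False by (simp add: mul_def)
  ultimately have "invl (last u) \<in> dirs (tree_graph N T) u" using u by (simp add: dirs_tree[OF S])
  then have "card (dirs (tree_graph N T) u) \<noteq> 0"
    using dirs_finite[OF tree_labs, of N T u] by auto
  moreover have "degree (tree_graph N T) u \<noteq> 1" using T u by (auto simp: Rm_def)
  ultimately show ?thesis using degree_tree[OF S, of u] by simp
qed

lemma occurrence_dirs:
  assumes li: "locally_injective D" and lb: "labs N D" and S: "T \<subseteq> FN N"
    and occ: "based_occurrence N T D v g" and u: "u \<in> T"
    and d: "2 \<le> degree (tree_graph N T) u"
  shows "dirs (tree_graph N T) u = dirs D (g u)"
proof (rule card_subset_eq[OF dirs_finite[OF lb]])
  show "dirs (tree_graph N T) u \<subseteq> dirs D (g u)"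
    using rmorph_dedge[of "tree_graph N T" D g] occ unfolding based_occurrence_def dirs_def by blast
  show "card (dirs (tree_graph N T) u) = card (dirs D (g u))"
    using occ u d degree_tree[OF S] degree_dirs[OF li lb] unfolding based_occurrence_def by simp
qed

lemma Rm_occurrence_unique:
  assumes c: "core_graph N D" and T: "T \<in> Rm N m" and occ: "based_occurrence N T D v g"
  shows "T = readable_upto N D v m"
proof
  note li = core_li[OF c] and lb = core_labs[OF c]
  have TS: "T \<in> SubX1 N" using T by (simp add: Rm_def)
  have S: "T \<subseteq> FN N" by (rule SubX1_D(3)[OF TS])
  have g: "rmorphism (tree_graph N T) D g" "g [] = v"
    using occ by (auto simp: based_occurrence_def)
  have reads: "\<And>w. w \<in> T \<Longrightarrow> walk D v w (g w)"
    using rmorphism_reads_tree[OF TS g(1)] g(2) by simp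
  show "T \<subseteq> readable_upto N D v m"
    using reads Rm_length_bound[OF T] S by (auto simp: readable_upto_def readable_def)
  show "readable_upto N D v m \<subseteq> T"
  proof
    fix w assume "w \<in> readable_upto N D v m"
    then show "w \<in> T"
    proof (induction w rule: rev_induct)
      case Nil
      then show ?case using SubX1_D(2)[OF TS] by simp
    next
      case (snoc l u)
      have u: "u \<in> T" using snoc.IH readable_upto_prefix[OF snoc.prems] by blast
      have ul: "length u < m" using snoc.prems by (simp add: readable_upto_def)
      have fw: "u @ [l] \<in> FN N" using snoc.prems readable_upto_FN[of N D v m] by blast
      obtain y where "walk D v (u @ [l]) y"
        using snoc.prems by (auto simp: readable_upto_def readable_def)
      then have "dedge D (g u) l y" using walk_det[OF li _ reads[OF u]] unfolding walk_snoc by blast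
      then have "l \<in> dirs (tree_graph N T) u"
        using occurrence_dirs[OF li lb S occ u Rm_interior_degree[OF T u ul]] by (auto simp: dirs_def)
      then show "u @ [l] \<in> T" using u mul_snoc[OF fw] by (simp add: dirs_tree[OF S])
    qed
  qed
qed

lemma nbhd_eq:
  assumes c: "core_graph N D" and v: "v \<in> verts D" and m: "1 \<le> m"
  shows "nbhd N D m v = readable_upto N D v m"
  unfolding nbhd_def
proof (rule the_equality)
  show "readable_upto N D v m \<in> Rm N m \<and> (\<exists>f. based_occurrence N (readable_upto N D v m) D v f)"
    using readable_upto_Rm[OF c v m] readable_upto_occurrence[OF c v m] by blast
  show "\<And>T. T \<in> Rm N m \<and> (\<exists>f. based_occurrence N T D v f) \<Longrightarrow> T = readable_upto N D v m"
    using Rm_occurrence_unique[OF c] by blast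
qed

section \<open>Fibre products\<close>

lemma dedge_fp:
  "dedge (fiber_product G H) (x1, x2) l (y1, y2) \<longleftrightarrow> dedge G x1 l y1 \<and> dedge H x2 l y2"
  unfolding dedge_def fiber_product_def by (cases "snd l") auto

lemma walk_fp:
  "walk (fiber_product G H) (x1, x2) w (y1, y2) \<longleftrightarrow> walk G x1 w y1 \<and> walk H x2 w y2"
proof (induction w arbitrary: x1 x2)
  case (Cons l w)
  have "walk (fiber_product G H) (x1, x2) (l # w) (y1, y2) \<longleftrightarrow>
      (\<exists>z1 z2. dedge (fiber_product G H) (x1, x2) l (z1, z2) \<and> walk (fiber_product G H) (z1, z2) w (y1, y2))"
    by auto
  also have "\<dots> \<longleftrightarrow> (\<exists>z1 z2. (dedge G x1 l z1 \<and> dedge H x2 l z2) \<and> (walk G z1 w y1 \<and> walk H z2 w y2))"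
    by (simp only: dedge_fp Cons.IH)
  also have "\<dots> \<longleftrightarrow> walk G x1 (l # w) y1 \<and> walk H x2 (l # w) y2"
    by auto
  finally show ?case .
qed simp

lemma li_fp:
  assumes "locally_injective G" "locally_injective H"
  shows "locally_injective (fiber_product G H)"
  unfolding li_iff
proof (intro allI impI)
  fix x y y' :: "'a \<times> 'b" and l :: letter
  assume a: "dedge (fiber_product G H) x l y" "dedge (fiber_product G H) x l y'"
  obtain x1 x2 y1 y2 z1 z2 where xyz: "x = (x1, x2)" "y = (y1, y2)" "y' = (z1, z2)"
    by (cases x; cases y; cases y') blast
  have "dedge G x1 l y1" "dedge H x2 l y2" "dedge G x1 l z1" "dedge H x2 l z2"
    using a unfolding xyz dedge_fp by auto
  then show "y = y'" using li_det[OF assms(1)] li_det[OF assms(2)] xyz by metis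
qed

lemma labs_fp: "labs N G \<Longrightarrow> labs N (fiber_product G H)"
  unfolding labs_def fiber_product_def by auto

lemma readable_upto_fp:
  "readable_upto N G v1 m \<inter> readable_upto N H v2 m = readable_upto N (fiber_product G H) (v1, v2) m"
proof -
  have "(\<exists>y. walk (fiber_product G H) (v1, v2) w y) \<longleftrightarrow> (\<exists>y1. walk G v1 w y1) \<and> (\<exists>y2. walk H v2 w y2)"
    for w
    using walk_fp[of G H v1 v2 w] by auto
  then show ?thesis unfolding readable_upto_def readable_def by blast
qed

text \<open>Two distinct reduced words read from p to the same vertex can be
  shortened, by cutting a common last letter (local injectivity lets us
  backtrack along it), until their last letters differ.\<close>

lemma strip_suffix:
  assumes li: "locally_injective G"
  shows "u \<in> FN N \<Longrightarrow> w \<in> FN N \<Longrightarrow> walk G p u x \<Longrightarrow> walk G p w x \<Longrightarrow> u \<noteq> w \<Longrightarrow>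
    \<exists>u' w' x'. u' \<in> FN N \<and> w' \<in> FN N \<and> walk G p u' x' \<and> walk G p w' x' \<and> u' \<noteq> w' \<and>
      (u' = [] \<or> w' = [] \<or> last u' \<noteq> last w')"
proof (induction "length u + length w" arbitrary: u w x rule: less_induct)
  case less
  show ?case
  proof (cases "u = [] \<or> w = [] \<or> last u \<noteq> last w")
    case True
    then show ?thesis using less.prems by blast
  next
    case False
    then have ne: "u \<noteq> []" "w \<noteq> []" and ll: "last u = last w" by auto
    define l where "l = last u"
    have ub: "u = butlast u @ [l]" using ne unfolding l_def by simp
    have wb: "w = butlast w @ [l]" using ne ll unfolding l_def by simp
    have "walk G p (butlast u @ [l]) x" using less.prems(3) ub by simp
    then obtain y0 where y0: "walk G p (butlast u) y0" "dedge G y0 l x" unfolding walk_snoc by blast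
    have "walk G p (butlast w @ [l]) x" using less.prems(4) wb by simp
    then obtain y1 where y1: "walk G p (butlast w) y1" "dedge G y1 l x" unfolding walk_snoc by blast
    have "y0 = y1" using li_det_back[OF li y0(2) y1(2)] .
    moreover have "butlast u \<noteq> butlast w" using less.prems(5) ub wb by metis
    moreover have "length (butlast u) + length (butlast w) < length u + length w"
      using ne by (simp add: Suc_le_eq)
    ultimately show ?thesis
      using less.hyps[of "butlast u" "butlast w" y0] FN_butlast less.prems(1,2) y0(1) y1(1)
      by blast
  qed
qed

text \<open>Hence two distinct reduced readings of the same vertex yield a
  nontrivial reduced closed walk u w^{-1} at p.\<close>

lemma distinct_readings_closed_walk:
  assumes li: "locally_injective G" and u: "u \<in> FN N" and w: "w \<in> FN N"
    and wu: "walk G p u x" and ww: "walk G p w x" and ne: "u \<noteq> w"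
  shows "\<exists>s. walk G p s p \<and> s \<noteq> [] \<and> s \<in> FN N"
proof -
  obtain u' w' x' where uw: "u' \<in> FN N" "w' \<in> FN N" "walk G p u' x'" "walk G p w' x'" "u' \<noteq> w'"
      and lst: "u' = [] \<or> w' = [] \<or> last u' \<noteq> last w'"
    using strip_suffix[OF li u w wu ww ne] by blast
  consider "w' = []" | "u' = []" | "u' \<noteq> []" "w' \<noteq> []" by blast
  then show ?thesis
  proof cases
    case 1
    then show ?thesis using uw by auto
  next
    case 2
    then show ?thesis using uw by auto
  next
    case 3
    have "walk G p (u' @ invw w') p" unfolding walk_append using uw(3) walk_invw[OF uw(4)] by blast
    moreover have "hd (invw w') \<noteq> invl (last u')" using lst 3 by (simp add: hd_invw)
    then have "u' @ invw w' \<in> FN N" using uw(1) FN_invw[OF uw(2)] 3 by (simp add: FN_append)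
    ultimately show ?thesis using 3 by blast
  qed
qed

lemma not_cyclically_reduced:
  assumes s: "s \<in> FN N" "s \<noteq> []" and hl: "hd s = invl (last s)"
  shows "\<exists>a q. s = a # q @ [invl a] \<and> q \<noteq> []"
proof -
  have tne: "tl s \<noteq> []"
  proof
    assume "tl s = []"
    then have "last s = hd s" using s(2) by (cases s) auto
    then show False using hl invl_neq[of "last s"] by simp
  qed
  have "s = hd s # butlast (tl s) @ [invl (hd s)]"
    using s(2) tne hl by (metis append_butlast_last_id inv_inv last_tl list.collapse)
  moreover have "butlast (tl s) \<noteq> []"
  proof
    assume "butlast (tl s) = []"
    then have "s = [hd s, invl (hd s)]" using \<open>s = hd s # butlast (tl s) @ [invl (hd s)]\<close> by simp
    then show False using s(1) by (metis FN_iff red.simps(3))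
  qed
  ultimately show ?thesis by blast
qed

text \<open>Peeling off matching first and last letters, a reduced path c followed
  by a nontrivial reduced loop s yields a reduced path followed by a
  cyclically reduced loop.\<close>

lemma cyc_reduce:
  assumes li: "locally_injective G"
  shows "walk G p c y \<Longrightarrow> walk G y s y \<Longrightarrow> s \<noteq> [] \<Longrightarrow> c @ s \<in> FN N \<Longrightarrow>
    \<exists>c' s' y'. walk G p c' y' \<and> walk G y' s' y' \<and> s' \<noteq> [] \<and> c' @ s' \<in> FN N \<and> hd s' \<noteq> invl (last s')"
proof (induction "length s" arbitrary: c s y rule: less_induct)
  case less
  show ?case
  proof (cases "hd s \<noteq> invl (last s)")
    case True
    then show ?thesis using less.prems by blast
  next
    case False
    have "s \<in> FN N" using less.prems(4) by (simp add: FN_append)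
    then obtain a q where sdec: "s = a # q @ [invl a]" and qne: "q \<noteq> []"
      using not_cyclically_reduced less.prems(3) False by blast
    have "walk G y (a # (q @ [invl a])) y" using less.prems(2) sdec by simp
    then obtain z z' where z: "dedge G y a z" "walk G z q z'" "dedge G z' (invl a) y"
      unfolding walk.simps walk_snoc by blast
    have "z' = z" using li_det[OF li _ z(1)] z(3) dedge_inv[of G z' a y] by simp
    then have wq: "walk G z q z" using z(2) by simp
    have wc: "walk G p (c @ [a]) z" using less.prems(1) z(1) unfolding walk_snoc by blast
    have "((c @ [a]) @ q) @ [invl a] \<in> FN N" using less.prems(4) sdec by simp
    then have cq: "(c @ [a]) @ q \<in> FN N" using FN_append by blast
    have "length q < length s" using sdec by simp
    then show ?thesis using less.hyps[OF _ wc wq qne cq] by blast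
  qed
qed

lemma concat_rep_snoc: "concat (replicate k s) @ s = s @ concat (replicate k s)"
  by (induction k) auto

lemma pump:
  assumes "walk G p c y" "walk G y s y" "s \<noteq> []" "c @ s \<in> FN N" "hd s \<noteq> invl (last s)"
  shows "c @ concat (replicate k s) \<in> FN N \<and> walk G p (c @ concat (replicate k s)) y"
proof (induction k)
  case 0
  then show ?case using assms(1,4) by (simp add: FN_append)
next
  case (Suc k)
  have eq: "c @ concat (replicate (Suc k) s) = (c @ concat (replicate k s)) @ s"
    using concat_rep_snoc[of k s] by simp
  have sf: "s \<in> FN N" using assms(4) by (simp add: FN_append)
  have j: "hd s \<noteq> invl (last (c @ concat (replicate k s)))" if "c @ concat (replicate k s) \<noteq> []"
  proof (cases k)
    case 0
    then show ?thesis using that assms(3,4) by (simp add: FN_append)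
  next
    case (Suc k')
    have "concat (replicate k s) = concat (replicate k' s) @ s" using Suc concat_rep_snoc[of k' s] by simp
    then show ?thesis using assms(3,5) by simp
  qed
  have "(c @ concat (replicate k s)) @ s \<in> FN N"
    using Suc.IH sf j assms(3) by (simp add: FN_append del: append_assoc)
  moreover have "walk G p ((c @ concat (replicate k s)) @ s) y"
    using Suc.IH assms(2) unfolding walk_append by blast
  ultimately show ?case using eq by simp
qed

lemma len_pump: "s \<noteq> [] \<Longrightarrow> k \<le> length (c @ concat (replicate k s))"
  by (cases s) (auto simp: length_concat sum_list_replicate)

lemma reading_injective:
  assumes li: "locally_injective G" and fin: "finite (readable N G p)"
    and u: "u \<in> FN N" and w: "w \<in> FN N" and wu: "walk G p u x" and ww: "walk G p w x"
  shows "u = w"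
proof (rule ccontr)
  assume "u \<noteq> w"
  then obtain s where s: "walk G p s p" "s \<noteq> []" "s \<in> FN N"
    using distinct_readings_closed_walk[OF li u w wu ww] by blast
  obtain c s' y where cs: "walk G p c y" "walk G y s' y" "s' \<noteq> []" "c @ s' \<in> FN N" "hd s' \<noteq> invl (last s')"
    using cyc_reduce[OF li, where c = "[]" and y = p and s = s and N = N] s by auto
  define k where "k = Suc (Max (length ` readable N G p))"
  have "c @ concat (replicate k s') \<in> readable N G p"
    using pump[OF cs] by (auto simp: readable_def)
  then have "length (c @ concat (replicate k s')) \<le> Max (length ` readable N G p)"
    by (rule Max_ge[OF finite_imageI[OF fin] imageI])
  then have "length (c @ concat (replicate k s')) < k" unfolding k_def by linarith
  then show False using len_pump[OF cs(3), of k c] by simp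
qed

lemma iso_dedge:
  assumes e: "\<forall>u\<in>T. \<forall>w\<in>T. \<forall>a. (u, a, w) \<in> edges A \<longleftrightarrow> (h u, a, h w) \<in> edges B"
    and u: "u \<in> T" and w: "w \<in> T"
  shows "dedge A u l w \<longleftrightarrow> dedge B (h u) l (h w)"
  using e u w unfolding dedge_def by (cases "snd l") auto

lemma iso_reads_back:
  assumes T: "T \<in> SubX1 N" and img: "h ` T = comp_verts P p" and h0: "h [] = p"
    and e: "\<forall>u\<in>T. \<forall>w\<in>T. \<forall>a. (u, a, w) \<in> edges (tree_graph N T) \<longleftrightarrow> (h u, a, h w) \<in> edges (component P p)"
    and w: "w \<in> FN N" and walk: "walk P p w y"
  shows "w \<in> T \<and> h w = y"
  using w walk
proof (induction w arbitrary: y rule: rev_induct)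
  case Nil
  then show ?case using SubX1_D(2)[OF T] h0 by simp
next
  case (snoc l u)
  obtain y0 where y0: "walk P p u y0" "dedge P y0 l y"
    using snoc.prems(2) unfolding walk_snoc by blast
  have "u \<in> FN N" using snoc.prems(1) by (simp add: FN_append)
  then have u: "u \<in> T" "h u = y0" using snoc.IH y0(1) by auto
  have y0C: "y0 \<in> comp_verts P p" using img u by auto
  have "y \<in> h ` T" using comp_step[OF y0C y0(2)] img by simp
  then obtain t where t: "t \<in> T" "h t = y" by blast
  have "dedge (component P p) (h u) l (h t)" using y0(2) u t y0C by (simp add: dedge_comp)
  then have "dedge (tree_graph N T) u l t" using iso_dedge[OF e u(1) t(1)] by blast
  then have "t = u @ [l]" using dedge_tree[OF SubX1_D(3)[OF T]] mul_snoc[OF snoc.prems(1)] by auto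
  then show ?case using t by simp
qed

lemma component_iso_imp_readable:
  assumes T: "T \<in> SubX1 N" and iso: "based_iso (tree_graph N T) [] (component P p) p"
  shows "readable N P p = T"
proof -
  have vT: "verts (tree_graph N T) = T" by (simp add: tree_graph_def induced_def)
  have vC: "verts (component P p) = comp_verts P p" by (simp add: component_def)
  obtain h where bij: "bij_betw h T (comp_verts P p)" and h0: "h [] = p"
    and e: "\<forall>u\<in>T. \<forall>w\<in>T. \<forall>a. (u, a, w) \<in> edges (tree_graph N T) \<longleftrightarrow> (h u, a, h w) \<in> edges (component P p)"
    using iso unfolding based_iso_def vT vC by blast
  have img: "h ` T = comp_verts P p" using bij by (simp add: bij_betw_def)
  have hom: "rmorphism (tree_graph N T) (component P p) h"
    unfolding rmorphism_def vT vC
  proof (intro conjI allI impI)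
    show "h ` T \<subseteq> comp_verts P p" using img by simp
    fix u a w assume uw: "(u, a, w) \<in> edges (tree_graph N T)"
    then have "u \<in> T" "w \<in> T" by (auto simp: tree_edge_iff)
    then show "(h u, a, h w) \<in> edges (component P p)" using e uw by blast
  qed
  have reads: "walk P p w (h w)" if "w \<in> T" for w
    using walk_component[OF rmorphism_reads_tree[OF T hom that]] h0 by simp
  show ?thesis
    using reads iso_reads_back[OF T img h0 e] SubX1_D(3)[OF T] by (auto simp: readable_def)
qed

text \<open>Conversely, when the readable words at p are exactly T, the reading map
  is injective (T is finite), surjective onto the component and maps the
  edges of T exactly onto the edges of the component.\<close>

lemma readable_tree_edges:
  assumes li: "locally_injective P" and lb: "labs N P" and RT: "readable N P p = T"
    and inj: "inj_on (endpt P p) T" and u: "u \<in> T" and w: "w \<in> T"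
  shows "(u, a, w) \<in> edges (tree_graph N T) \<longleftrightarrow> dedge P (endpt P p u) (a, True) (endpt P p w)"
proof -
  have memT: "x \<in> T \<longleftrightarrow> x \<in> FN N \<and> (\<exists>y. walk P p x y)" for x
    unfolding RT[symmetric] readable_def by simp
  have reads: "walk P p x (endpt P p x)" if "x \<in> T" for x
    using that memT endpt_eq[OF li] by blast
  have uf: "u \<in> FN N" using u memT by blast
  show ?thesis
  proof
    assume "(u, a, w) \<in> edges (tree_graph N T)"
    then have "w = mul u (a, True)" by (simp add: tree_edge_iff)
    then show "dedge P (endpt P p u) (a, True) (endpt P p w)"
      using mul_walk[OF li reads[OF u]] reads[OF w] by simp
  next
    assume d: "dedge P (endpt P p u) (a, True) (endpt P p w)"
    have fl: "a < N" using labs_dedge[OF lb d] by simp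
    have wm: "walk P p (mul u (a, True)) (endpt P p w)" by (rule walk_mul[OF li reads[OF u] d])
    have mT: "mul u (a, True) \<in> T" using memT FN_mul[OF uf] fl wm by auto
    have "endpt P p (mul u (a, True)) = endpt P p w" by (rule endpt_eq[OF li wm])
    then have "mul u (a, True) = w" using inj mT w by (auto dest: inj_onD)
    then show "(u, a, w) \<in> edges (tree_graph N T)" using u w uf fl by (auto simp: tree_edge_iff)
  qed
qed

lemma reading_map_inj:
  assumes li: "locally_injective P" and T: "T \<in> SubX1 N" and RT: "readable N P p = T"
  shows "inj_on (endpt P p) T"
proof (rule inj_onI)
  have memT: "x \<in> T \<longleftrightarrow> x \<in> FN N \<and> (\<exists>y. walk P p x y)" for x
    unfolding RT[symmetric] readable_def by simp
  have fin: "finite (readable N P p)" using RT SubX1_D(1)[OF T] by simp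
  fix u w assume uw: "u \<in> T" "w \<in> T" and same: "endpt P p u = endpt P p w"
  have "u \<in> FN N" "w \<in> FN N" using uw memT by blast+
  moreover have "walk P p u (endpt P p u)" "walk P p w (endpt P p u)"
    using uw memT endpt_eq[OF li] same by metis+
  ultimately show "u = w" by (rule reading_injective[OF li fin])
qed

lemma reading_map_image:
  assumes li: "locally_injective P" and lb: "labs N P" and RT: "readable N P p = T"
  shows "endpt P p ` T = comp_verts P p"
proof
  have memT: "x \<in> T \<longleftrightarrow> x \<in> FN N \<and> (\<exists>y. walk P p x y)" for x
    unfolding RT[symmetric] readable_def by simp
  show "endpt P p ` T \<subseteq> comp_verts P p"
  proof (rule image_subsetI)
    fix w assume "w \<in> T"
    then show "endpt P p w \<in> comp_verts P p"
      using memT endpt_eq[OF li] unfolding comp_verts_walk by blast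
  qed
  show "comp_verts P p \<subseteq> endpt P p ` T"
  proof
    fix y assume "y \<in> comp_verts P p"
    then obtain w where "walk P p w y" by (auto simp: comp_verts_walk)
    then obtain w' where "w' \<in> FN N" "walk P p w' y" using walk_reduce[OF li lb] by blast
    then show "y \<in> endpt P p ` T" using memT endpt_eq[OF li] by blast
  qed
qed

lemma readable_imp_component_iso:
  assumes li: "locally_injective P" and lb: "labs N P" and T: "T \<in> SubX1 N"
    and RT: "readable N P p = T"
  shows "based_iso (tree_graph N T) [] (component P p) p"
proof -
  let ?h = "endpt P p"
  have inj: "inj_on ?h T" by (rule reading_map_inj[OF li T RT])
  have img: "?h ` T = comp_verts P p" by (rule reading_map_image[OF li lb RT])
  have edges: "(u, a, w) \<in> edges (tree_graph N T) \<longleftrightarrow> (?h u, a, ?h w) \<in> edges (component P p)"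
    if "u \<in> T" "w \<in> T" for u w a
  proof -
    have "?h u \<in> comp_verts P p" using img that(1) by blast
    then have "(?h u, a, ?h w) \<in> edges (component P p) \<longleftrightarrow> dedge P (?h u) (a, True) (?h w)"
      by (simp add: component_def dedge_def)
    then show ?thesis using readable_tree_edges[OF li lb RT inj that] by simp
  qed
  show ?thesis
    unfolding based_iso_def
  proof (intro exI conjI)
    show "bij_betw ?h (verts (tree_graph N T)) (verts (component P p))"
      using inj img by (simp add: bij_betw_def tree_graph_def induced_def component_def)
    show "?h [] = p" by (rule endpt_eq[OF li]) simp
    show "\<forall>u\<in>verts (tree_graph N T). \<forall>w\<in>verts (tree_graph N T). \<forall>a.
        (u, a, w) \<in> edges (tree_graph N T) \<longleftrightarrow> (?h u, a, ?h w) \<in> edges (component P p)"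
      using edges by (simp add: tree_graph_def induced_def)
  qed
qed

lemma component_iso_iff_readable:
  assumes li: "locally_injective P" and lb: "labs N P" and T: "T \<in> SubX1 N"
  shows "based_iso (tree_graph N T) [] (component P p) p \<longleftrightarrow> readable N P p = T"
  by (rule iffI[OF component_iso_imp_readable[OF T] readable_imp_component_iso[OF li lb T]])

text \<open>For T inside the ball of radius r, the truncation at level r + 1 of the
  readable words equals T iff no readable word is longer than r, i.e. iff
  the readable words are exactly T.\<close>

lemma readable_upto_eq_iff:
  assumes Tb: "T \<subseteq> ballX N r"
  shows "readable_upto N P p (r + 1) = T \<longleftrightarrow> readable N P p = T"
proof
  assume RT: "readable_upto N P p (r + 1) = T"
  have short: "length w \<le> r" if w: "w \<in> readable N P p" for w
  proof (rule ccontr)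
    assume long: "\<not> length w \<le> r"
    have "take (r + 1) w \<in> readable_upto N P p (r + 1)"
      using readable_prefix[of "take (r + 1) w" "drop (r + 1) w"] w by (simp add: readable_upto_def)
    then have "take (r + 1) w \<in> T" using RT by simp
    then have "length (take (r + 1) w) \<le> r" using Tb by (auto simp: ballX_def)
    then show False using long by simp
  qed
  then have "readable N P p = readable_upto N P p (r + 1)" by (auto simp: readable_upto_def dest: short)
  then show "readable N P p = T" using RT by simp
next
  assume RT: "readable N P p = T"
  have "length w \<le> r + 1" if "w \<in> T" for w using Tb that by (auto simp: ballX_def)
  then show "readable_upto N P p (r + 1) = T" unfolding readable_upto_def RT by blast
qed

theorem mainTheorem12:
  fixes N r :: nat and T :: "letter list set"
    and D1 :: "'a rgraph" and D2 :: "'b rgraph" and v1 :: 'a and v2 :: 'b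
  assumes "N \<ge> 2"
    and "T \<in> SubX1 N" and "T \<subseteq> ballX N r"
    and "core_graph N D1" and "core_graph N D2"
    and "v1 \<in> verts D1" and "v2 \<in> verts D2"
  shows "based_iso (tree_graph N T) [] (component (fiber_product D1 D2) (v1, v2)) (v1, v2)
     \<longleftrightarrow> nbhd N D1 (r + 1) v1 \<inter> nbhd N D2 (r + 1) v2 = T"
proof -
  let ?P = "fiber_product D1 D2"
  have li: "locally_injective ?P" by (rule li_fp[OF core_li[OF assms(4)] core_li[OF assms(5)]])
  have lb: "labs N ?P" by (rule labs_fp[OF core_labs[OF assms(4)]])
  have "nbhd N D1 (r + 1) v1 \<inter> nbhd N D2 (r + 1) v2 = readable_upto N ?P (v1, v2) (r + 1)"
    using nbhd_eq[OF assms(4,6)] nbhd_eq[OF assms(5,7)] readable_upto_fp by simp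
  then have "nbhd N D1 (r + 1) v1 \<inter> nbhd N D2 (r + 1) v2 = T \<longleftrightarrow> readable N ?P (v1, v2) = T"
    using readable_upto_eq_iff[OF assms(3)] by simp
  also have "\<dots> \<longleftrightarrow> based_iso (tree_graph N T) [] (component ?P (v1, v2)) (v1, v2)"
    using component_iso_iff_readable[OF li lb assms(2)] by simp
  finally show ?thesis by blast
qed

end
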